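(* Let $G$ be a signed digraph that has an initial cycle. Then no Boolean network on $G$ is synchronizing.
   Context: A signed digraph on $V$ is $(V,E)$ with $E\subseteq V\times V\times\{-1,1\}$. A strong component is a maximal strongly connected induced subgraph; it is initial if no arc enters it from outside. An initial cycle is an initial strong component which is (isomorphic to) a cycle (a cycle has no repeated vertices; a loop is a cycle). A Boolean network (BN) is $f:\{0,1\}^V\to\{0,1\}^V$; its signed interaction digraph has a positive (negative) arc from $j$ to $i$ iff for some $x$ with $x_j=0$, $f_i(x+e_j)-f_i(x)$ is positive (negative). A BN on $G$ is one whose signed interaction digraph is $G$. $f^i(x)$ is $x$ with $x_i$ replaced by $f_i(x)$; $f^{i_1\cdots i_\ell}=f^{i_\ell}\circ\cdots\circ f^{i_1}$; $f$ is synchronizing if $f^w$ is constant for some word $w$. *)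

theory Defs
  imports Main
begin

text \<open>The vertex set V is the (finite) universe of the type 'v.
  A signed digraph on V is a set of arcs (j, i, s) with s \<in> {-1, 1}.\<close>

type_synonym 'v sdigraph = "('v \<times> 'v \<times> int) set"

definition signed_digraph :: "'v sdigraph \<Rightarrow> bool" where
  "signed_digraph E \<longleftrightarrow> (\<forall>(j, i, s) \<in> E. s \<in> {-1, 1})"

definition arcs_in :: "'v sdigraph \<Rightarrow> 'v set \<Rightarrow> ('v \<times> 'v) set" where
  "arcs_in E C = {(u, w). u \<in> C \<and> w \<in> C \<and> (\<exists>s. (u, w, s) \<in> E)}"

definition strongly_connected_on :: "'v sdigraph \<Rightarrow> 'v set \<Rightarrow> bool" where
  "strongly_connected_on E C \<longleftrightarrow> C \<noteq> {} \<and>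
     (\<forall>u \<in> C. \<forall>w \<in> C. (u, w) \<in> (arcs_in E C)\<^sup>*)"

definition strong_component :: "'v sdigraph \<Rightarrow> 'v set \<Rightarrow> bool" where
  "strong_component E C \<longleftrightarrow> strongly_connected_on E C \<and>
     (\<forall>D. C \<subseteq> D \<and> strongly_connected_on E D \<longrightarrow> D = C)"

definition initial_component :: "'v sdigraph \<Rightarrow> 'v set \<Rightarrow> bool" where
  "initial_component E C \<longleftrightarrow> strong_component E C \<and>
     (\<forall>u w s. (u, w, s) \<in> E \<and> w \<in> C \<longrightarrow> u \<in> C)"

text \<open>The signed subgraph induced by C is (isomorphic to) a cycle
  v_0 \<rightarrow> v_1 \<rightarrow> ... \<rightarrow> v_(n-1) \<rightarrow> v_0 (n \<ge> 1, distinct vertices; n = 1 is a loop),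
  each arc carrying exactly one sign and no other arcs inside C.\<close>
definition is_cycle_on :: "'v sdigraph \<Rightarrow> 'v set \<Rightarrow> bool" where
  "is_cycle_on E C \<longleftrightarrow> (\<exists>n vs. n \<ge> 1 \<and> inj_on vs {..<n} \<and> C = vs ` {..<n} \<and>
     (\<forall>u \<in> C. \<forall>w \<in> C. \<forall>s. (u, w, s) \<in> E \<longrightarrow>
        (\<exists>i<n. u = vs i \<and> w = vs (Suc i mod n))) \<and>
     (\<forall>i<n. \<exists>!s. (vs i, vs (Suc i mod n), s) \<in> E))"

definition has_initial_cycle :: "'v sdigraph \<Rightarrow> bool" where
  "has_initial_cycle E \<longleftrightarrow> (\<exists>C. initial_component E C \<and> is_cycle_on E C)"

text \<open>Boolean networks: f : {0,1}^V \<rightarrow> {0,1}^V, with configurations 'v \<Rightarrow> bool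
  (False = 0, True = 1).\<close>
definition interaction_graph :: "(('v \<Rightarrow> bool) \<Rightarrow> ('v \<Rightarrow> bool)) \<Rightarrow> 'v sdigraph" where
  "interaction_graph f =
     {(j, i, 1) | j i. \<exists>x. \<not> x j \<and> \<not> f x i \<and> f (x(j := True)) i} \<union>
     {(j, i, -1) | j i. \<exists>x. \<not> x j \<and> f x i \<and> \<not> f (x(j := True)) i}"

definition fupd :: "(('v \<Rightarrow> bool) \<Rightarrow> ('v \<Rightarrow> bool)) \<Rightarrow> 'v \<Rightarrow> ('v \<Rightarrow> bool) \<Rightarrow> ('v \<Rightarrow> bool)" where
  "fupd f i x = x(i := f x i)"

text \<open>f^{i_1...i_l} = f^{i_l} \<circ> ... \<circ> f^{i_1}: the first letter is applied first.\<close>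
definition fword :: "(('v \<Rightarrow> bool) \<Rightarrow> ('v \<Rightarrow> bool)) \<Rightarrow> 'v list \<Rightarrow> ('v \<Rightarrow> bool) \<Rightarrow> ('v \<Rightarrow> bool)" where
  "fword f w = fold (fupd f) w"

definition synchronizing :: "(('v \<Rightarrow> bool) \<Rightarrow> ('v \<Rightarrow> bool)) \<Rightarrow> bool" where
  "synchronizing f \<longleftrightarrow> (\<exists>w c. \<forall>x. fword f w x = c)"

end

theory Submission
  imports Defs
begin

text \<open>Every vertex w of an initial cycle has exactly one in-neighbour u in the whole
  graph, its predecessor on the cycle, so f_w(x) is either x_u or its negation.
  Consequently the update f^j maps two configurations that are complementary on the
  cycle to two configurations that are again complementary on it. Applying any word
  to the all-zero and the all-one configuration therefore yields different results.\<close>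

definition sole_in_neighbour :: "'v sdigraph \<Rightarrow> 'v \<Rightarrow> 'v \<Rightarrow> bool" where
  "sole_in_neighbour E u w \<longleftrightarrow> (\<exists>s. (u, w, s) \<in> E) \<and> (\<forall>j s. (j, w, s) \<in> E \<longrightarrow> j = u)"

definition complementary_on :: "'v set \<Rightarrow> ('v \<Rightarrow> bool) \<Rightarrow> ('v \<Rightarrow> bool) \<Rightarrow> bool" where
  "complementary_on C x y \<longleftrightarrow> (\<forall>v\<in>C. y v = (\<not> x v))"

lemma arc_in_interaction_graph_iff:
  "(\<exists>s. (j, w, s) \<in> interaction_graph f) \<longleftrightarrow> (\<exists>x. \<not> x j \<and> f x w \<noteq> f (x(j := True)) w)"
proof
  assume "\<exists>x. \<not> x j \<and> f x w \<noteq> f (x(j := True)) w"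
  then obtain x where "\<not> x j" and "f x w \<noteq> f (x(j := True)) w" by blast
  then have "(j, w, if f x w then -1 else 1) \<in> interaction_graph f"
    unfolding interaction_graph_def by (cases "f x w") (simp_all, blast+)
  then show "\<exists>s. (j, w, s) \<in> interaction_graph f" ..
qed (auto simp: interaction_graph_def)

lemma update_eq_if_no_arc:
  assumes "\<forall>s. (j, w, s) \<notin> interaction_graph f"
  shows "f (x(j := b)) w = f (x(j := c)) w"
proof -
  have "f (x(j := False)) w = f (x(j := True)) w"
  proof (rule ccontr)
    assume "f (x(j := False)) w \<noteq> f (x(j := True)) w"
    then have "\<exists>s. (j, w, s) \<in> interaction_graph f"
      unfolding arc_in_interaction_graph_iff by (intro exI[of _ "x(j := False)"]) simp
    with assms show False by blast
  qed
  then show ?thesis by (cases b; cases c) auto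
qed

lemma eq_if_agree_on_in_neighbours:
  fixes x y :: "'v::finite \<Rightarrow> bool"
  assumes in_nbrs: "\<And>j s. (j, w, s) \<in> interaction_graph f \<Longrightarrow> j \<in> U"
    and agree: "\<forall>j\<in>U. x j = y j"
  shows "f x w = f y w"
proof -
  have "f x w = f y w" if "finite D" "{j. x j \<noteq> y j} \<subseteq> D" "D \<inter> U = {}" for D
    using that
  proof (induction D arbitrary: x rule: finite_induct)
    case empty
    then have "x = y" by auto
    then show ?case by simp
  next
    case (insert j D)
    have "j \<notin> U" using insert.prems by blast
    then have no_arc: "\<forall>s. (j, w, s) \<notin> interaction_graph f" using in_nbrs by blast
    have "f x w = f (x(j := x j)) w" by simp
    also have "\<dots> = f (x(j := y j)) w"
      using no_arc by (rule update_eq_if_no_arc)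
    also have "\<dots> = f y w"
      using insert.prems by (intro insert.IH) auto
    finally show ?case .
  qed
  from this[of "- U"] agree show ?thesis by auto
qed

lemma sole_in_neighbour_flips:
  fixes x y :: "'v::finite \<Rightarrow> bool"
  assumes "sole_in_neighbour (interaction_graph f) u w"
    and "y u = (\<not> x u)"
  shows "f y w = (\<not> f x w)"
proof -
  have in_nbr: "\<And>j s. (j, w, s) \<in> interaction_graph f \<Longrightarrow> j \<in> {u}"
    using assms(1) unfolding sole_in_neighbour_def by blast
  have depends_on_u: "f z w = f (x(u := z u)) w" for z
    using eq_if_agree_on_in_neighbours[where U = "{u}", OF in_nbr] by simp
  obtain z where "\<not> z u" and "f z w \<noteq> f (z(u := True)) w"
    using assms(1) arc_in_interaction_graph_iff unfolding sole_in_neighbour_def by metis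
  then have "f (x(u := False)) w \<noteq> f (x(u := True)) w"
    using depends_on_u[of z] depends_on_u[of "z(u := True)"] by simp
  then show ?thesis
    using depends_on_u[of x] depends_on_u[of y] assms(2) by (cases "x u") auto
qed

context
  fixes f :: "('v::finite \<Rightarrow> bool) \<Rightarrow> ('v \<Rightarrow> bool)" and C :: "'v set"
  assumes sole: "\<forall>w\<in>C. \<exists>u\<in>C. sole_in_neighbour (interaction_graph f) u w"
begin

lemma complementary_on_fupd:
  assumes "complementary_on C x y"
  shows "complementary_on C (fupd f j x) (fupd f j y)"
  unfolding complementary_on_def
proof
  fix v assume "v \<in> C"
  then obtain u where "u \<in> C" and u: "sole_in_neighbour (interaction_graph f) u v"
    using sole by blast
  have "y u = (\<not> x u)"
    using assms \<open>u \<in> C\<close> unfolding complementary_on_def by blast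
  with u have "f y v = (\<not> f x v)"
    by (rule sole_in_neighbour_flips)
  with \<open>v \<in> C\<close> assms show "fupd f j y v = (\<not> fupd f j x v)"
    unfolding complementary_on_def fupd_def by auto
qed

lemma complementary_on_fword:
  "complementary_on C x y \<Longrightarrow> complementary_on C (fword f ws x) (fword f ws y)"
  unfolding fword_def
  by (induction ws arbitrary: x y) (simp_all add: complementary_on_fupd)

lemma not_synchronizing_if_sole_in_neighbours:
  assumes "C \<noteq> {}"
  shows "\<not> synchronizing f"
proof
  assume "synchronizing f"
  then obtain ws c where const: "\<forall>x. fword f ws x = c"
    unfolding synchronizing_def by blast
  have "complementary_on C (fword f ws (\<lambda>_. False)) (fword f ws (\<lambda>_. True))"
    by (rule complementary_on_fword) (simp add: complementary_on_def)
  with const assms show False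
    unfolding complementary_on_def by auto
qed

end

lemma Suc_mod_inj:
  assumes "i < n" "k < n" "Suc i mod n = Suc k mod (n::nat)"
  shows "i = k"
  using assms by (metis Suc_lessI mod_less mod_self nat.inject nat.simps(3))

lemma initial_cycle_sole_in_neighbour:
  assumes ini: "initial_component E C" and cyc: "is_cycle_on E C" and "w \<in> C"
  shows "\<exists>u\<in>C. sole_in_neighbour E u w"
proof -
  obtain n vs where "n \<ge> 1" and inj: "inj_on vs {..<n}" and C_eq: "C = vs ` {..<n}"
    and inside: "\<forall>u \<in> C. \<forall>w \<in> C. \<forall>s. (u, w, s) \<in> E \<longrightarrow>
        (\<exists>i<n. u = vs i \<and> w = vs (Suc i mod n))"
    and arcs: "\<forall>i<n. \<exists>!s. (vs i, vs (Suc i mod n), s) \<in> E"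
    using cyc unfolding is_cycle_on_def by blast
  obtain m where "m < n" and w: "w = vs m" using \<open>w \<in> C\<close> C_eq by auto
  define i where "i = (m + n - 1) mod n"
  have "i < n" and m_eq: "m = Suc i mod n"
    using \<open>m < n\<close> \<open>n \<ge> 1\<close> unfolding i_def by (auto simp: mod_Suc_eq)
  have "sole_in_neighbour E (vs i) w"
    unfolding sole_in_neighbour_def
  proof (intro conjI allI impI)
    show "\<exists>s. (vs i, w, s) \<in> E" using arcs \<open>i < n\<close> w m_eq by blast
    fix j s assume arc: "(j, w, s) \<in> E"
    have "j \<in> C" using ini arc w C_eq \<open>m < n\<close> unfolding initial_component_def by blast
    then obtain k where "k < n" "j = vs k" and w_k: "w = vs (Suc k mod n)"
      using inside arc \<open>w \<in> C\<close> by blast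
    have "Suc k mod n < n" using \<open>n \<ge> 1\<close> by simp
    with inj w w_k \<open>m < n\<close> have "Suc k mod n = Suc i mod n"
      unfolding m_eq by (metis inj_onD lessThan_iff)
    with \<open>k < n\<close> \<open>i < n\<close> \<open>j = vs k\<close> show "j = vs i" using Suc_mod_inj by blast
  qed
  then show ?thesis using C_eq \<open>i < n\<close> by blast
qed

theorem lemma2:
  fixes E :: "('v::finite) sdigraph"
  assumes "signed_digraph E"
    and "has_initial_cycle E"
  shows "\<not> (\<exists>f. interaction_graph f = E \<and> synchronizing f)"
proof
  assume "\<exists>f. interaction_graph f = E \<and> synchronizing f"
  then obtain f where E: "E = interaction_graph f" and "synchronizing f" by blast
  obtain C where ini: "initial_component E C" and cyc: "is_cycle_on E C"
    using assms(2) unfolding has_initial_cycle_def by blast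
  have "C \<noteq> {}"
    using ini unfolding initial_component_def strong_component_def strongly_connected_on_def
    by blast
  moreover have "\<forall>w\<in>C. \<exists>u\<in>C. sole_in_neighbour (interaction_graph f) u w"
    using initial_cycle_sole_in_neighbour[OF ini cyc] E by blast
  ultimately have "\<not> synchronizing f"
    by (rule not_synchronizing_if_sole_in_neighbours[rotated])
  then show False using \<open>synchronizing f\<close> by contradiction
qed

end
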